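(* Let $m\ge 2$, $\omega=e^{2\pi i/m}$, and let $$C_n(q)=\prod_{2\le t\le n}\frac{[t+n]_q}{[t]_q}=\frac{1}{[n+1]_q}{2n\brack n}_q$$ be the $q$-Catalan number (a polynomial in $q$). Then for every $1\le j\le m-1$, $$\lim_{n\to\infty}\frac{C_n(\omega^j)}{C_n(1)}=0 ,$$ where $C_n(1)=\frac1{n+1}\binom{2n}{n}$.
   Context: $[t]_q=1+q+\cdots+q^{t-1}$, $[n]_q!=[1]_q\cdots[n]_q$ with $[0]_q!=1$, and ${n\brack k}_q=\frac{[n]_q!}{[k]_q![n-k]_q!}$. Here $C_n(\omega^j)$ means the value at $q=\omega^j$ of the polynomial $C_n(q)$. *)

theory Defs
  imports "HOL-Analysis.Analysis" "HOL-Computational_Algebra.Polynomial"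
begin

definition qint :: "nat \<Rightarrow> complex poly" where
  "qint t = (\<Sum>i<t. monom 1 i)"

definition qfact :: "nat \<Rightarrow> complex poly" where
  "qfact n = (\<Prod>t=1..n. qint t)"

text \<open>Gaussian binomial coefficient (exact polynomial division).\<close>
definition qbinom :: "nat \<Rightarrow> nat \<Rightarrow> complex poly" where
  "qbinom n k = qfact n div (qfact k * qfact (n - k))"

definition qcatalan :: "nat \<Rightarrow> complex poly" where
  "qcatalan n = qbinom (2*n) n div qint (n+1)"

end

theory Submission
  imports Defs "HOL-Real_Asymp.Real_Asymp"
begin

(*
  At a root of unity z \<noteq> 1 the q-Catalan number C_n(z) grows at most like 2^n,
  whereas C_n(1) = binom(2n,n)/(n+1) grows like 4^n / n^(3/2); hence the ratio tends to 0.

  1. The Gaussian binomials are described by the q-Pascal recursion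
     G(N+1,k+1) = G(N,k) + q^(k+1) G(N,k+1), and the polynomial division in the
     definition of qcatalan is exact: C_n = G(2n,n) - q G(2n,n+1).
  2. q-Lucas theorem: if z is a primitive d-th root of unity, then
     G(N,k)(z) = binom(N div d, k div d) * G(N mod d, k mod d)(z).
     Together with |G(N,k)(z)| \<le> binom(N,k) on the unit circle this gives
     |C_n(z)| \<le> 2^(n+d+1).
  3. Every root of unity z \<noteq> 1 is a primitive d-th root of unity for some d \<ge> 2,
     and the central binomial lower bound binom(2n,n) \<ge> 4^n/(2n) finishes the proof.
*)

section \<open>q-integers and q-factorials\<close>

text \<open>Basic evaluation rules for [t]_q and [n]_q!; both are nonzero polynomials for t > 0,
  which makes the polynomial divisions in the definitions exact cancellations.\<close>

lemma qint_0 [simp]: "qint 0 = 0"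
  by (simp add: qint_def)

lemma qint_Suc: "qint (Suc t) = qint t + monom 1 t"
  by (simp add: qint_def)

lemma qint_1 [simp]: "qint (Suc 0) = 1"
  by (simp add: qint_def one_pCons monom_0)

lemma qint_add: "qint (a + b) = qint a + monom 1 a * qint b"
proof (induction b)
  case (Suc b)
  have "qint (a + Suc b) = qint (a + b) + monom 1 (a + b)"
    by (simp add: qint_Suc)
  also have "\<dots> = qint a + monom 1 a * (qint b + monom 1 b)"
    using Suc by (simp add: mult_monom algebra_simps)
  finally show ?case by (simp add: qint_Suc)
qed simp

lemma poly_qint: "poly (qint t) x = (\<Sum>i<t. x ^ i)"
  by (simp add: qint_def poly_sum poly_monom)

lemma qint_nonzero: "t > 0 \<Longrightarrow> qint t \<noteq> 0"
proof
  assume "t > 0" "qint t = 0"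
  then have "poly (qint t) 1 = 0" by simp
  then show False using \<open>t > 0\<close> by (simp add: poly_qint)
qed

lemma qfact_0 [simp]: "qfact 0 = 1"
  by (simp add: qfact_def)

lemma qfact_Suc: "qfact (Suc n) = qfact n * qint (Suc n)"
  by (simp add: qfact_def prod.nat_ivl_Suc' mult.commute)

lemma qfact_nonzero: "qfact n \<noteq> 0"
  by (induction n) (simp_all add: qfact_Suc qint_nonzero)

section \<open>Gaussian binomials via the q-Pascal recursion\<close>

text \<open>The q-Pascal triangle; by qbinom_eq_gauss below it computes the Gaussian binomials.\<close>
fun gauss :: "nat \<Rightarrow> nat \<Rightarrow> complex poly" where
  "gauss n 0 = 1"
| "gauss 0 (Suc k) = 0"
| "gauss (Suc n) (Suc k) = gauss n k + monom 1 (Suc k) * gauss n (Suc k)"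

lemma gauss_eq_0: "n < k \<Longrightarrow> gauss n k = 0"
  by (induction n k rule: gauss.induct) auto

lemma gauss_diag [simp]: "gauss n n = 1"
  by (induction n) (simp_all add: gauss_eq_0)

lemma qfact_mult_gauss: "k \<le> n \<Longrightarrow> qfact k * qfact (n - k) * gauss n k = qfact n"
proof (induction n arbitrary: k)
  case (Suc n k)
  show ?case
  proof (cases k)
    case (Suc k')
    show ?thesis
    proof (cases "k' < n")
      case lt: True
      have IH1: "qfact k' * qfact (n - k') * gauss n k' = qfact n"
        using Suc.IH lt by simp
      have IH2: "qfact (Suc k') * qfact (n - Suc k') * gauss n (Suc k') = qfact n"
        using Suc.IH lt by simp
      have split_fact: "qfact (n - k') = qfact (n - Suc k') * qint (n - k')"
        using lt qfact_Suc[of "n - Suc k'"] by (simp add: Suc_diff_Suc)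
      have split_int: "qint (Suc n) = qint (Suc k') + monom 1 (Suc k') * qint (n - k')"
        using qint_add[of "Suc k'" "n - k'"] lt by simp
      have "qfact (Suc k') * qfact (n - k') * gauss (Suc n) (Suc k')
          = qint (Suc k') * (qfact k' * qfact (n - k') * gauss n k')
            + monom 1 (Suc k') * qint (n - k')
              * (qfact (Suc k') * qfact (n - Suc k') * gauss n (Suc k'))"
        by (simp add: qfact_Suc split_fact algebra_simps)
      also have "\<dots> = qfact n * qint (Suc n)"
        by (simp only: IH1 IH2) (simp add: split_int algebra_simps)
      finally show ?thesis using Suc by (simp add: qfact_Suc)
    qed (use Suc Suc.prems in simp)
  qed simp
qed simp

lemma qbinom_eq_gauss:
  assumes "k \<le> n" shows "qbinom n k = gauss n k"
proof -
  have "qbinom n k = (qfact k * qfact (n - k)) * gauss n k div (qfact k * qfact (n - k))"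
    using qfact_mult_gauss[OF assms] by (simp add: qbinom_def)
  then show ?thesis using qfact_nonzero by simp
qed

text \<open>[n+1] G(2n,n+1) = [n] G(2n,n), the q-analogue of binom(2n,n+1) = n/(n+1) binom(2n,n).\<close>
lemma gauss_central_ratio: "qint (Suc n) * gauss (2*n) (Suc n) = qint n * gauss (2*n) n"
proof (cases n)
  case (Suc n')
  have upper: "qfact (Suc n) * qfact (n - 1) * gauss (2*n) (Suc n) = qfact (2*n)"
    using qfact_mult_gauss[of "Suc n" "2*n"] Suc by (simp add: numeral_2_eq_2)
  have central: "qfact n * qfact n * gauss (2*n) n = qfact (2*n)"
    using qfact_mult_gauss[of n "2*n"] by (simp add: mult_2)
  have "qfact n = qfact (n - 1) * qint n"
    using Suc qfact_Suc[of n'] by simp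
  then have "(qfact n * qfact (n - 1)) * (qint (Suc n) * gauss (2*n) (Suc n))
      = (qfact n * qfact (n - 1)) * (qint n * gauss (2*n) n)"
    using upper central by (simp add: qfact_Suc algebra_simps)
  then show ?thesis using qfact_nonzero by simp
qed simp

text \<open>The division in the definition of the q-Catalan number is exact:
  C_n(q) = G(2n,n) - q G(2n,n+1).\<close>
lemma qint_mult_qcatalan_form:
  "qint (Suc n) * (gauss (2*n) n - monom 1 1 * gauss (2*n) (Suc n)) = gauss (2*n) n"
proof -
  have "qint (Suc n) = 1 + monom 1 1 * qint n"
    using qint_add[of 1 n] by simp
  then show ?thesis
    using gauss_central_ratio[of n] by (simp add: algebra_simps)
qed

lemma qcatalan_eq: "qcatalan n = gauss (2*n) n - monom 1 1 * gauss (2*n) (Suc n)"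
proof -
  have "qcatalan n = gauss (2*n) n div qint (Suc n)"
    by (simp add: qcatalan_def qbinom_eq_gauss)
  also have "\<dots> = qint (Suc n) * (gauss (2*n) n - monom 1 1 * gauss (2*n) (Suc n))
      div qint (Suc n)"
    by (simp only: qint_mult_qcatalan_form)
  finally show ?thesis using qint_nonzero[of "Suc n"] by simp
qed

lemma poly_gauss_1: "poly (gauss n k) 1 = of_nat (n choose k)"
  by (induction n k rule: gauss.induct) (simp_all add: poly_monom)

lemma poly_qcatalan_1: "poly (qcatalan n) 1 = of_nat ((2*n) choose n) / of_nat (Suc n)"
proof -
  have "of_nat (Suc n) * poly (qcatalan n) 1 = (of_nat ((2*n) choose n) :: complex)"
    using arg_cong[OF qint_mult_qcatalan_form[of n], of "\<lambda>p. poly p 1"]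
    by (simp add: qcatalan_eq poly_gauss_1 poly_qint)
  then show ?thesis
    by (simp add: eq_divide_eq mult.commute del: of_nat_Suc)
qed

lemma real_choose_le_pow2: "real (n choose k) \<le> 2 ^ n"
  using binomial_le_pow2[of n k] by (simp add: of_nat_le_iff[symmetric])

lemma norm_poly_gauss_le: "norm z = 1 \<Longrightarrow> norm (poly (gauss n k) z) \<le> real (n choose k)"
proof (induction n k rule: gauss.induct)
  case (3 n k)
  have "norm (poly (gauss (Suc n) (Suc k)) z)
      \<le> norm (poly (gauss n k) z) + norm (z ^ Suc k * poly (gauss n (Suc k)) z)"
    by (simp add: poly_monom norm_triangle_ineq)
  also have "\<dots> \<le> real (n choose k) + real (n choose Suc k)"
    using 3 by (intro add_mono) (simp_all add: norm_mult norm_power)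
  finally show ?case by simp
qed auto

section \<open>The q-Lucas theorem at a primitive root of unity\<close>

locale primitive_root =
  fixes z :: complex and d :: nat
  assumes root: "z ^ d = 1"
    and primitive: "\<And>t. 0 < t \<Longrightarrow> t < d \<Longrightarrow> z ^ t \<noteq> 1"
    and order_ge_2: "d \<ge> 2"
begin

lemma norm_eq_1: "norm z = 1"
  using power_eq_1_iff[OF root] order_ge_2 by auto

lemma power_mod: "z ^ n = z ^ (n mod d)"
  by (metis mult_div_mod_eq power_add power_mult root power_one mult_1)

text \<open>[t]_z vanishes for t = d but not for 0 < t < d, so [k]_z! \<noteq> 0 for k < d.\<close>
lemma poly_qfact_nonzero: "n < d \<Longrightarrow> poly (qfact n) z \<noteq> 0"
proof (induction n)
  case (Suc n)
  have "z ^ Suc n \<noteq> 1" using Suc.prems by (intro primitive) simp_all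
  then have "poly (qint (Suc n)) z \<noteq> 0"
    using power_diff_1_eq[of z "Suc n"] by (auto simp: poly_qint)
  then show ?case using Suc by (simp add: qfact_Suc)
qed simp

lemma poly_qint_order: "poly (qint d) z = 0"
  using power_diff_1_eq[of z d] root primitive[of 1] order_ge_2 by (auto simp: poly_qint)

text \<open>G(d,k)(z) = 0 for 0 < k < d: the numerator [d]_z! vanishes, the denominator does not.\<close>
lemma poly_gauss_order: assumes "0 < k" "k < d" shows "poly (gauss d k) z = 0"
proof -
  have "poly (qfact k) z * poly (qfact (d - k)) z * poly (gauss d k) z = poly (qfact d) z"
    using arg_cong[OF qfact_mult_gauss[of k d], of "\<lambda>p. poly p z"] assms by simp
  also have "\<dots> = 0"
    using order_ge_2 qfact_Suc[of "d - 1"] poly_qint_order by simp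
  finally show ?thesis using poly_qfact_nonzero[of k] poly_qfact_nonzero[of "d - k"] assms by simp
qed

definition lucas :: "nat \<Rightarrow> nat \<Rightarrow> complex" where
  "lucas N k = of_nat (N div d choose k div d) * poly (gauss (N mod d) (k mod d)) z"

lemma lucas_0_left: "lucas 0 k = poly (gauss 0 k) z"
proof (cases "k < d")
  case False
  then have "0 < k div d" using order_ge_2 by (simp add: div_greater_zero_iff)
  then show ?thesis using False order_ge_2 by (simp add: lucas_def gauss_eq_0)
qed (simp add: lucas_def)

lemma lucas_0_right: "lucas N 0 = 1"
  by (simp add: lucas_def)

text \<open>Writing
  N = Qd + a and k = Kd + b, the four cases are whether N + 1 and k + 1 carry into the
  next block of length d; the only case with cancellation (a = d - 1, b < d - 1) uses
  G(d, b+1)(z) = 0.\<close>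
lemma lucas_pascal: "lucas (Suc N) (Suc k) = lucas N k + z ^ Suc k * lucas N (Suc k)"
proof -
  define a b Q K where "a = N mod d" and "b = k mod d" and "Q = N div d" and "K = k div d"
  have ab: "a < d" "b < d" using order_ge_2 by (simp_all add: a_def b_def)
  have z_Suc: "z ^ Suc k = z ^ (Suc k mod d)" by (rule power_mod)
  have lucas_N_k: "lucas N k = of_nat (Q choose K) * poly (gauss a b) z"
    by (simp add: lucas_def a_def b_def Q_def K_def)
  note divmod = mod_Suc div_Suc a_def[symmetric] b_def[symmetric] Q_def[symmetric] K_def[symmetric]
  consider "Suc a = d" "Suc b = d" | "Suc a = d" "Suc b < d" | "Suc a < d" "Suc b = d"
    | "Suc a < d" "Suc b < d"
    using ab by linarith
  then show ?thesis
  proof cases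
    case 1
    then have "a = b" by simp
    with 1 show ?thesis by (simp add: lucas_N_k lucas_def z_Suc divmod del: power_Suc)
  next
    case 2
    have "poly (gauss a b) z + z ^ Suc b * poly (gauss a (Suc b)) z = poly (gauss d (Suc b)) z"
      by (simp add: poly_monom flip: 2(1))
    also have "\<dots> = 0" using poly_gauss_order[of "Suc b"] 2 by simp
    finally have "lucas N k + z ^ Suc k * lucas N (Suc k) = 0"
      using 2 by (simp add: lucas_N_k lucas_def z_Suc divmod distrib_left[symmetric]
          mult.left_commute del: power_Suc)
    then show ?thesis using 2 by (simp add: lucas_def divmod)
  next
    case 3
    then have "a < b" by simp
    with 3 show ?thesis
      by (simp add: lucas_N_k lucas_def z_Suc divmod gauss_eq_0 del: power_Suc)
  next
    case 4
    then show ?thesis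
      by (simp add: lucas_N_k lucas_def z_Suc divmod poly_monom algebra_simps del: power_Suc)
  qed
qed

theorem q_lucas: "poly (gauss N k) z = lucas N k"
proof (induction N arbitrary: k)
  case 0
  show ?case by (rule lucas_0_left[symmetric])
next
  case (Suc N k)
  then show ?case
    by (cases k) (simp_all add: lucas_0_right lucas_pascal poly_monom)
qed

lemma norm_poly_gauss_le_pow2: "norm (poly (gauss N k) z) \<le> 2 ^ (N div d) * 2 ^ (N mod d)"
proof -
  have "norm (poly (gauss (N mod d) (k mod d)) z) \<le> real (N mod d choose k mod d)"
    by (rule norm_poly_gauss_le[OF norm_eq_1])
  also have "\<dots> \<le> 2 ^ (N mod d)"
    by (rule real_choose_le_pow2)
  finally have "real (N div d choose k div d) * norm (poly (gauss (N mod d) (k mod d)) z)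
      \<le> 2 ^ (N div d) * 2 ^ (N mod d)"
    by (intro mult_mono real_choose_le_pow2) simp_all
  then show ?thesis
    by (simp only: q_lucas) (simp add: lucas_def norm_mult)
qed

lemma norm_poly_gauss_double_le: "norm (poly (gauss (2*n) k) z) \<le> 2 ^ d * 2 ^ n"
proof -
  have "2*n div d \<le> 2*n div 2" using div_le_mono2[of 2 d "2*n"] order_ge_2 by simp
  then have div_bound: "(2::real) ^ (2*n div d) \<le> 2 ^ n" by (intro power_increasing) simp_all
  have mod_bound: "(2::real) ^ (2*n mod d) \<le> 2 ^ d"
    using order_ge_2 by (intro power_increasing) simp_all
  have "norm (poly (gauss (2*n) k) z) \<le> 2 ^ (2*n div d) * 2 ^ (2*n mod d)"
    by (rule norm_poly_gauss_le_pow2)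
  also have "\<dots> \<le> 2 ^ n * 2 ^ d"
    using div_bound mod_bound by (intro mult_mono) simp_all
  finally show ?thesis by (simp add: mult.commute)
qed

lemma norm_poly_qcatalan_le: "norm (poly (qcatalan n) z) \<le> 2 ^ Suc d * 2 ^ n"
proof -
  have "norm (poly (qcatalan n) z)
      \<le> norm (poly (gauss (2*n) n) z) + norm (z * poly (gauss (2*n) (Suc n)) z)"
    by (simp add: qcatalan_eq poly_monom norm_triangle_ineq4)
  also have "\<dots> \<le> 2 ^ d * 2 ^ n + 2 ^ d * 2 ^ n"
    using norm_poly_gauss_double_le[of n n] norm_poly_gauss_double_le[of n "Suc n"]
    by (intro add_mono) (simp_all add: norm_mult norm_eq_1)
  finally show ?thesis by simp
qed

end

section \<open>Roots of unity and the limit\<close>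

lemma primitive_root_exists:
  assumes "z ^ m = 1" "0 < m" "z \<noteq> 1"
  shows "\<exists>d. primitive_root z d"
proof -
  define d where "d = (LEAST t. 0 < t \<and> z ^ t = 1)"
  have d: "0 < d \<and> z ^ d = 1"
    unfolding d_def using LeastI[of "\<lambda>t. 0 < t \<and> z ^ t = 1" m] assms by blast
  moreover have "\<And>t. 0 < t \<Longrightarrow> t < d \<Longrightarrow> z ^ t \<noteq> 1"
    unfolding d_def using not_less_Least by blast
  moreover have "d \<noteq> 1" using d assms(3) by auto
  ultimately show ?thesis
    by (intro exI[of _ d]) (simp add: primitive_root_def)
qed

text \<open>Any exponential bound c 2^n on |C_n(z)| forces C_n(z)/C_n(1) \<rightarrow> 0, since
  C_n(1) = binom(2n,n)/(n+1) \<ge> 4^n / (2n(n+1)).\<close>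
lemma qcatalan_ratio_tendsto_0:
  fixes z :: complex
  assumes bound: "\<And>n. norm (poly (qcatalan n) z) \<le> c * 2 ^ n"
  shows "(\<lambda>n. poly (qcatalan n) z / poly (qcatalan n) 1) \<longlonglongrightarrow> 0"
proof (rule Lim_null_comparison)
  have "norm (poly (qcatalan 0) z) \<le> c"
    using bound[of 0] by simp
  then have "0 \<le> c"
    by (rule order_trans[OF norm_ge_zero])
  have majorant: "(\<lambda>n::nat. (2::real) ^ n * (real n + 1) * (2 * real n) / 4 ^ n) \<longlonglongrightarrow> 0"
    by real_asymp
  then show "(\<lambda>n. c * ((2::real) ^ n * (real n + 1) * (2 * real n) / 4 ^ n)) \<longlonglongrightarrow> 0"
    by (rule tendsto_mult_right_zero)
  show "\<forall>\<^sub>F n in sequentially. norm (poly (qcatalan n) z / poly (qcatalan n) 1)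
          \<le> c * (2 ^ n * (real n + 1) * (2 * real n) / 4 ^ n)"
  proof (rule eventually_sequentiallyI[of 1])
    fix n :: nat assume "1 \<le> n"
    define B where "B = real ((2*n) choose n)"
    have B_lower: "4 ^ n / (2 * real n) \<le> B"
      unfolding B_def using central_binomial_lower_bound[of n] \<open>1 \<le> n\<close> by simp
    have B_pos: "B > 0" unfolding B_def by simp
    have "norm (poly (qcatalan n) 1) = B / (real n + 1)"
      unfolding poly_qcatalan_1 norm_divide norm_of_nat B_def by simp
    then have "norm (poly (qcatalan n) z / poly (qcatalan n) 1)
        = norm (poly (qcatalan n) z) * (real n + 1) / B"
      by (simp add: norm_divide)
    also have "\<dots> \<le> (c * 2 ^ n) * (real n + 1) / (4 ^ n / (2 * real n))"
      using bound[of n] B_lower B_pos \<open>1 \<le> n\<close> \<open>0 \<le> c\<close>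
      by (intro frac_le mult_right_mono) simp_all
    also have "\<dots> = c * (2 ^ n * (real n + 1) * (2 * real n) / 4 ^ n)"
      by (simp add: field_simps)
    finally show "norm (poly (qcatalan n) z / poly (qcatalan n) 1)
          \<le> c * (2 ^ n * (real n + 1) * (2 * real n) / 4 ^ n)" .
  qed
qed

theorem mainTheorem5:
  fixes m j :: nat
  assumes "m \<ge> 2" and "1 \<le> j" and "j \<le> m - 1"
  defines "\<omega> \<equiv> exp (2 * complex_of_real pi * \<i> / of_nat m)"
  shows "(\<lambda>n. poly (qcatalan n) (\<omega> ^ j) / poly (qcatalan n) 1) \<longlonglongrightarrow> 0"
proof -
  have omega_pow: "\<omega> ^ j = exp (2 * of_real pi * \<i> * of_nat j / of_nat m)"
    unfolding \<omega>_def by (simp add: exp_of_nat_mult[symmetric] mult_ac)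
  have "(\<omega> ^ j) ^ m = 1"
    using assms(1) by (simp add: omega_pow complex_root_unity)
  moreover have "\<omega> ^ j \<noteq> 1"
    using assms(1-3) by (simp add: omega_pow complex_root_unity_eq_1 nat_dvd_not_less)
  ultimately obtain d where "primitive_root (\<omega> ^ j) d"
    using primitive_root_exists[of "\<omega> ^ j" m] assms(1) by auto
  then show ?thesis
    by (rule qcatalan_ratio_tendsto_0[OF primitive_root.norm_poly_qcatalan_le])
qed

end
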